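(* Let $X=[0,1]$ with the usual metric, $U=\{0,1\}$, and let $F_0,F_1:[0,1]\to[0,1]$ be given by $F_0(x)=\frac18$ for $0\le x<\frac14$, $F_0(x)=2x-\frac38$ for $\frac14\le x<\frac38$, $F_0(x)=(x-\frac38)^2+\frac38$ for $\frac38\le x\le1$; and $F_1(x)=0$ for $0\le x<\frac1{16}$, $F_1(x)=2x-\frac18$ for $\frac1{16}\le x<\frac18$, $F_1(x)=\frac14(x-\frac18)^{1/3}+\frac18$ for $\frac18\le x<\frac14$, $F_1(x)=-x+\frac12$ for $\frac14\le x<\frac12$, $F_1(x)=0$ for $\frac12\le x\le1$. Consider the control system $x_{n+1}=F_{u_n}(x_n)$ and let $Q=[\frac14,\frac12]$. Then $Q$ is finitely mean equi-invariant but not mean equi-invariant (the point $\frac38$ is not a mean equi-invariant point of $Q$).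
   Context: For $\omega=(\omega_0,\omega_1,\dots)\in\mathscr U=U^{\mathbb N_0}$ and $x\in X$: $\phi(0,x,\omega)=x$, $\phi(k,x,\omega)=F_{\omega_{k-1}}\circ\cdots\circ F_{\omega_0}(x)$. $d(y,Q)=\inf_{q\in Q}|y-q|$, $B(x,\delta)$ open ball. A point $x\in Q$ is a finitely mean equi-invariant point of $Q$ if for every $\varepsilon>0$ there exist $\delta>0$ and a finite set $F\subset\mathscr U$ such that for every $y\in B(x,\delta)\cap Q$ there is $\omega\in F$ with $\limsup_{n\to\infty}\frac1n\sum_{i=0}^{n-1}d(\phi(i,y,\omega),Q)<\varepsilon$; it is a mean equi-invariant point if this holds with $F$ a singleton. $Q$ is (finitely) mean equi-invariant if all its points are (finitely) mean equi-invariant points. *)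

theory Defs
  imports "HOL-Analysis.Analysis" "HOL-Library.Liminf_Limsup"
begin

primrec phi :: "('u \<Rightarrow> 'a \<Rightarrow> 'a) \<Rightarrow> nat \<Rightarrow> 'a \<Rightarrow> (nat \<Rightarrow> 'u) \<Rightarrow> 'a" where
  "phi F 0 x \<omega> = x"
| "phi F (Suc k) x \<omega> = F (\<omega> k) (phi F k x \<omega>)"

definition controls :: "'u set \<Rightarrow> (nat \<Rightarrow> 'u) set" where
  "controls U = {\<omega>. \<forall>i. \<omega> i \<in> U}"

definition mean_dist :: "('u \<Rightarrow> 'a::metric_space \<Rightarrow> 'a) \<Rightarrow> 'a set \<Rightarrow> 'a \<Rightarrow> (nat \<Rightarrow> 'u) \<Rightarrow> ereal" where
  "mean_dist F Q y \<omega> =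
     limsup (\<lambda>n. ereal ((1 / real n) * (\<Sum>i<n. infdist (phi F i y \<omega>) Q)))"

definition fmei_point :: "('u \<Rightarrow> 'a::metric_space \<Rightarrow> 'a) \<Rightarrow> 'u set \<Rightarrow> 'a set \<Rightarrow> 'a \<Rightarrow> bool" where
  "fmei_point F U Q x \<longleftrightarrow> x \<in> Q \<and>
     (\<forall>\<epsilon>>0. \<exists>\<delta>>0. \<exists>S. finite S \<and> S \<subseteq> controls U \<and>
        (\<forall>y \<in> ball x \<delta> \<inter> Q. \<exists>\<omega>\<in>S. mean_dist F Q y \<omega> < ereal \<epsilon>))"

definition mei_point :: "('u \<Rightarrow> 'a::metric_space \<Rightarrow> 'a) \<Rightarrow> 'u set \<Rightarrow> 'a set \<Rightarrow> 'a \<Rightarrow> bool" where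
  "mei_point F U Q x \<longleftrightarrow> x \<in> Q \<and>
     (\<forall>\<epsilon>>0. \<exists>\<delta>>0. \<exists>\<omega>\<in>controls U.
        (\<forall>y \<in> ball x \<delta> \<inter> Q. mean_dist F Q y \<omega> < ereal \<epsilon>))"

definition fmei_set :: "('u \<Rightarrow> 'a::metric_space \<Rightarrow> 'a) \<Rightarrow> 'u set \<Rightarrow> 'a set \<Rightarrow> bool" where
  "fmei_set F U Q \<longleftrightarrow> (\<forall>x\<in>Q. fmei_point F U Q x)"

definition mei_set :: "('u \<Rightarrow> 'a::metric_space \<Rightarrow> 'a) \<Rightarrow> 'u set \<Rightarrow> 'a set \<Rightarrow> bool" where
  "mei_set F U Q \<longleftrightarrow> (\<forall>x\<in>Q. mei_point F U Q x)"

definition F0 :: "real \<Rightarrow> real" where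
  "F0 x = (if x < 1/4 then 1/8
           else if x < 3/8 then 2*x - 3/8
           else (x - 3/8)^2 + 3/8)"

definition F1 :: "real \<Rightarrow> real" where
  "F1 x = (if x < 1/16 then 0
           else if x < 1/8 then 2*x - 1/8
           else if x < 1/4 then (1/4) * root 3 (x - 1/8) + 1/8
           else if x < 1/2 then - x + 1/2
           else 0)"

definition Fsys :: "nat \<Rightarrow> real \<Rightarrow> real" where
  "Fsys u = (if u = 0 then F0 else F1)"

end

theory Submission
  imports Defs
begin

text \<open>
  On \<open>[1/4, 3/8)\<close> the constant control 1 drives every orbit to \<open>1/4\<close>: after one step,
  in the variable \<open>t = x - 1/8\<close>, the map \<open>F1\<close> acts as \<open>t \<mapsto> root 3 t / 4\<close>, whose
  orbits increase to its fixed point \<open>1/8\<close>. On \<open>[3/8, 1/2]\<close> the constant control 0 keeps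
  the orbit inside \<open>Q\<close>. By Cesaro averaging, these two controls have mean distance 0 from \<open>Q\<close>.

  Near \<open>3/8\<close> no single control works: both maps preserve \<open>[0, 1/8]\<close>, whose points are at
  distance at least \<open>1/8\<close> from \<open>Q\<close>. A control that ever uses \<open>F1\<close> sends the fixed point
  \<open>3/8\<close> of \<open>F0\<close> to \<open>1/8\<close>. The all-zero control sends \<open>3/8 - 2^(-m)/8\<close> to \<open>1/4\<close> after
  \<open>m\<close> steps, since \<open>F0\<close> doubles the distance to \<open>3/8\<close> from below, and then to \<open>1/8\<close>.
\<close>

lemma sum_lessThan_split:
  fixes f :: "nat \<Rightarrow> 'a::comm_monoid_add"
  assumes "N \<le> n"
  shows "(\<Sum>i<n. f i) = (\<Sum>i<N. f i) + (\<Sum>i=N..<n. f i)"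
  using assms by (simp add: lessThan_atLeast0 sum.atLeastLessThan_concat)

lemma cesaro_mean_tendsto_zero:
  fixes d :: "nat \<Rightarrow> real"
  assumes "d \<longlonglongrightarrow> 0"
  shows "(\<lambda>n. 1 / real n * (\<Sum>i<n. d i)) \<longlonglongrightarrow> 0"
proof (rule LIMSEQ_I)
  fix \<epsilon> :: real
  assume "0 < \<epsilon>"
  then obtain N where N: "\<And>i. N \<le> i \<Longrightarrow> \<bar>d i\<bar> < \<epsilon>/2"
    using LIMSEQ_D[OF assms, of "\<epsilon>/2"] by auto
  define M where "M = (\<Sum>i<N. \<bar>d i\<bar>)"
  obtain K where K: "M / (\<epsilon>/2) < real K"
    using reals_Archimedean2 by blast
  have "\<bar>1 / real n * (\<Sum>i<n. d i)\<bar> < \<epsilon>" if n: "N + K + 1 \<le> n" for n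
  proof -
    have "\<bar>\<Sum>i<n. d i\<bar> \<le> (\<Sum>i<n. \<bar>d i\<bar>)"
      by (rule sum_abs)
    also have "\<dots> = M + (\<Sum>i=N..<n. \<bar>d i\<bar>)"
      unfolding M_def using n by (intro sum_lessThan_split) simp
    also have "(\<Sum>i=N..<n. \<bar>d i\<bar>) \<le> (\<Sum>i=N..<n. \<epsilon>/2)"
      using N by (intro sum_mono) (simp add: less_imp_le)
    also have "\<dots> \<le> real n * (\<epsilon>/2)"
      using \<open>0 < \<epsilon>\<close> by simp
    also have "M < real n * (\<epsilon>/2)"
    proof -
      have "M < real K * (\<epsilon>/2)"
        using K \<open>0 < \<epsilon>\<close> by (simp add: divide_less_eq)
      also have "\<dots> \<le> real n * (\<epsilon>/2)"
        using n \<open>0 < \<epsilon>\<close> by (intro mult_right_mono) auto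
      finally show ?thesis .
    qed
    finally have "\<bar>\<Sum>i<n. d i\<bar> < \<epsilon> * real n"
      by (simp add: mult.commute)
    then show ?thesis
      using n by (simp add: abs_mult divide_less_eq)
  qed
  then show "\<exists>n0. \<forall>n\<ge>n0. norm (1 / real n * (\<Sum>i<n. d i) - 0) < \<epsilon>"
    by auto
qed

lemma cesaro_mean_limsup_ge:
  fixes d :: "nat \<Rightarrow> real"
  assumes "eventually (\<lambda>i. c \<le> d i) sequentially"
  shows "ereal c \<le> limsup (\<lambda>n. ereal (1 / real n * (\<Sum>i<n. d i)))"
proof -
  \<comment> \<open>\<open>d \<ge> c - e\<close> with \<open>e\<close> eventually zero, so the means of \<open>d\<close> dominate a sequence tending to \<open>c\<close>\<close>
  define e where "e i = max 0 (c - d i)" for i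
  have "e \<longlonglongrightarrow> 0"
    using assms by (intro tendsto_eventually) (auto elim: eventually_mono simp: e_def)
  then have "(\<lambda>n. c - 1 / real n * (\<Sum>i<n. e i)) \<longlonglongrightarrow> c"
    using cesaro_mean_tendsto_zero tendsto_diff[OF tendsto_const] by fastforce
  then have "ereal c = limsup (\<lambda>n. ereal (c - 1 / real n * (\<Sum>i<n. e i)))"
    unfolding lim_ereal[symmetric] by (rule lim_imp_Limsup[OF trivial_limit_sequentially, symmetric])
  also have "\<dots> \<le> limsup (\<lambda>n. ereal (1 / real n * (\<Sum>i<n. d i)))"
  proof (rule Limsup_mono)
    show "\<forall>\<^sub>F n in sequentially. ereal (c - 1 / real n * (\<Sum>i<n. e i)) \<le> ereal (1 / real n * (\<Sum>i<n. d i))"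
      using eventually_gt_at_top[of 0]
    proof eventually_elim
      case (elim n)
      have "(\<Sum>i<n. c - e i) \<le> (\<Sum>i<n. d i)"
        by (intro sum_mono) (simp add: e_def)
      then have "(real n * c - (\<Sum>i<n. e i)) / real n \<le> (\<Sum>i<n. d i) / real n"
        by (simp add: sum_subtractf divide_right_mono)
      then show ?case
        using elim by (simp add: diff_divide_distrib)
    qed
  qed
  finally show ?thesis .
qed

lemma mean_dist_eq_0_of_tendsto:
  assumes "(\<lambda>i. infdist (phi F i y \<omega>) Q) \<longlonglongrightarrow> 0"
  shows "mean_dist F Q y \<omega> = 0"
proof -
  have "(\<lambda>n. ereal (1 / real n * (\<Sum>i<n. infdist (phi F i y \<omega>) Q))) \<longlonglongrightarrow> ereal 0"
    unfolding lim_ereal by (rule cesaro_mean_tendsto_zero[OF assms])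
  then show ?thesis
    unfolding mean_dist_def zero_ereal_def by (rule lim_imp_Limsup[OF trivial_limit_sequentially])
qed

lemma mean_dist_ge_of_eventually_ge:
  assumes "eventually (\<lambda>i. c \<le> infdist (phi F i y \<omega>) Q) sequentially"
  shows "ereal c \<le> mean_dist F Q y \<omega>"
  unfolding mean_dist_def using assms by (rule cesaro_mean_limsup_ge)

lemma infdist_atLeastAtMost_ge:
  fixes x :: real
  assumes "a \<le> b" "x \<le> a - c"
  shows "c \<le> infdist x {a..b}"
proof -
  have "c \<le> (INF z\<in>{a..b}. dist x z)"
    using assms by (intro cINF_greatest) (auto simp: dist_real_def)
  then show ?thesis
    using assms by (simp add: infdist_notempty)
qed

lemma Fsys_simps [simp]: "Fsys 0 = F0" "Fsys (Suc u) = F1"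
  by (simp_all add: Fsys_def)

lemma Fsys_maps_low_interval: "x \<in> {0..1/8} \<Longrightarrow> Fsys u x \<in> {0..1/8}"
  by (auto simp: Fsys_def F0_def F1_def)

lemma phi_Fsys_stays_low:
  assumes "phi Fsys i y \<omega> \<in> {0..1/8}" "i \<le> j"
  shows "phi Fsys j y \<omega> \<in> {0..1/8}"
  using assms(2)
proof (induction j rule: dec_induct)
  case base
  then show ?case using assms(1) .
next
  case (step k)
  then show ?case by (metis Fsys_maps_low_interval phi.simps(2))
qed

lemma mean_dist_ge_of_reaching_low:
  assumes "phi Fsys i y \<omega> \<in> {0..1/8}"
  shows "ereal (1/8) \<le> mean_dist Fsys {1/4..1/2} y \<omega>"
proof (rule mean_dist_ge_of_eventually_ge)
  show "\<forall>\<^sub>F j in sequentially. 1/8 \<le> infdist (phi Fsys j y \<omega>) {1/4..1/2}"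
    using eventually_ge_at_top[of i]
  proof eventually_elim
    case (elim j)
    then have "phi Fsys j y \<omega> \<le> 1/4 - 1/8"
      using phi_Fsys_stays_low[OF assms] by auto
    then show ?case
      by (intro infdist_atLeastAtMost_ge) simp_all
  qed
qed

lemma F0_maps_upper_interval: "x \<in> {3/8..1/2} \<Longrightarrow> F0 x \<in> {3/8..1/2}"
proof -
  assume x: "x \<in> {3/8..1/2}"
  then have "(x - 3/8)^2 \<le> (1/8)^2"
    by (intro power_mono) auto
  with x show ?thesis
    by (simp add: F0_def power2_eq_square)
qed

lemma phi_const_0_upper_interval:
  "y \<in> {3/8..1/2} \<Longrightarrow> phi Fsys i y (\<lambda>_. 0) \<in> {3/8..1/2}"
  by (induction i) (simp_all only: phi.simps Fsys_simps F0_maps_upper_interval)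

lemma root_3_one_eighth: "root 3 (1/8) = 1/2"
  using real_root_power_cancel[of 3 "1/2"] by (simp add: power3_eq_cube)

lemma cube_root_quarter_bounds:
  fixes t :: real
  assumes "0 < t" "t \<le> 1/8"
  shows "0 < root 3 t / 4" "root 3 t / 4 \<le> 1/8" "t \<le> root 3 t / 4"
proof -
  show "0 < root 3 t / 4"
    using assms by simp
  have "root 3 t \<le> root 3 (1/8)"
    using assms by simp
  then show "root 3 t / 4 \<le> 1/8"
    by (simp add: root_3_one_eighth)
  have "t^2 \<le> (1/8)^2"
    using assms by (intro power_mono) auto
  then have "(4*t)^3 \<le> t"
    using assms by (simp add: power3_eq_cube power2_eq_square mult_le_cancel_right1)
  then have "root 3 ((4*t)^3) \<le> root 3 t"
    by (subst real_root_le_iff) auto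
  moreover have "root 3 ((4*t)^3) = 4*t"
    using assms by (intro real_root_power_cancel) auto
  ultimately show "t \<le> root 3 t / 4"
    by linarith
qed

lemma cube_root_quarter_fixed_point:
  fixes L :: real
  assumes "0 < L" "L = root 3 L / 4"
  shows "L = 1/8"
proof -
  have "4*L = root 3 L"
    using assms(2) by simp
  then have "(4*L)^3 = L"
    using assms(1) real_root_pow_pos[of 3 L] by simp
  then have "L * (8*L - 1) * (8*L + 1) = 0"
    by (simp add: algebra_simps power3_eq_cube)
  with assms(1) show ?thesis
    by simp
qed

lemma cube_root_quarter_orbit_tendsto:
  fixes s :: "nat \<Rightarrow> real"
  assumes start: "0 < s 0" "s 0 \<le> 1/8"
    and step: "\<And>i. 0 < s i \<Longrightarrow> s i \<le> 1/8 \<Longrightarrow> s (Suc i) = root 3 (s i) / 4"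
  shows "s \<longlonglongrightarrow> 1/8"
proof -
  have bounds: "0 < s i \<and> s i \<le> 1/8" for i
  proof (induction i)
    case 0
    show ?case using start by simp
  next
    case (Suc i)
    then show ?case
      using step[of i] cube_root_quarter_bounds[of "s i"] by simp
  qed
  have recursion: "s (Suc i) = root 3 (s i) / 4" for i
    using bounds step by blast
  have "incseq s"
    unfolding incseq_Suc_iff recursion using bounds cube_root_quarter_bounds(3) by blast
  then obtain L where L: "s \<longlonglongrightarrow> L"
    using incseq_convergent[of s "1/8"] bounds by blast
  have "0 < L"
    using start(1) incseq_le[OF \<open>incseq s\<close> L, of 0] by linarith
  have "(\<lambda>i. s (Suc i)) \<longlonglongrightarrow> root 3 L / 4"
    unfolding recursion by (intro tendsto_divide tendsto_real_root L tendsto_const) simp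
  then have "L = root 3 L / 4"
    by (rule LIMSEQ_unique[OF LIMSEQ_Suc[OF L]])
  with \<open>0 < L\<close> have "L = 1/8"
    by (rule cube_root_quarter_fixed_point)
  with L show ?thesis
    by simp
qed

lemma F1_above_one_eighth:
  assumes "0 < t" "t \<le> 1/8"
  shows "F1 (1/8 + t) = 1/8 + root 3 t / 4"
proof (cases "t < 1/8")
  case True
  then show ?thesis
    using assms by (simp add: F1_def)
next
  case False
  with assms have t: "t = 1/8"
    by simp
  show ?thesis
    unfolding t using root_3_one_eighth by (simp add: F1_def)
qed

lemma phi_const_1_tendsto_one_quarter:
  assumes "y \<in> {1/4..<3/8}"
  shows "(\<lambda>i. phi Fsys i y (\<lambda>_. 1)) \<longlonglongrightarrow> 1/4"
proof -
  define s where "s i = phi Fsys (Suc i) y (\<lambda>_. 1) - 1/8" for i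
  have "s \<longlonglongrightarrow> 1/8"
  proof (rule cube_root_quarter_orbit_tendsto)
    show "0 < s 0" "s 0 \<le> 1/8"
      using assms by (auto simp: s_def F1_def)
    show "s (Suc i) = root 3 (s i) / 4" if "0 < s i" "s i \<le> 1/8" for i
      using F1_above_one_eighth[OF that] by (simp add: s_def)
  qed
  from tendsto_add[OF this tendsto_const[of "1/8"]]
  have "(\<lambda>i. phi Fsys (Suc i) y (\<lambda>_. 1)) \<longlonglongrightarrow> 1/4"
    by (simp add: s_def)
  then show ?thesis
    by (rule LIMSEQ_imp_Suc)
qed

lemma constant_control_mean_dist_eq_0:
  assumes "y \<in> {1/4..1/2}"
  obtains \<omega> where "\<omega> \<in> {\<lambda>_. 0, \<lambda>_. 1}" "mean_dist Fsys {1/4..1/2} y \<omega> = 0"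
proof (cases "y < 3/8")
  case True
  have "(\<lambda>i. infdist (phi Fsys i y (\<lambda>_. 1)) {1/4..1/2}) \<longlonglongrightarrow> infdist (1/4::real) {1/4..1/2}"
    using True assms by (intro tendsto_infdist phi_const_1_tendsto_one_quarter) simp
  then have "mean_dist Fsys {1/4..1/2} y (\<lambda>_. 1) = 0"
    by (intro mean_dist_eq_0_of_tendsto) simp
  then show ?thesis
    using that by blast
next
  case False
  have "infdist (phi Fsys i y (\<lambda>_. 0)) {1/4..1/2} = 0" for i
    using phi_const_0_upper_interval[of y i] False assms by (intro infdist_zero) auto
  then have "mean_dist Fsys {1/4..1/2} y (\<lambda>_. 0) = 0"
    by (intro mean_dist_eq_0_of_tendsto) simp
  then show ?thesis
    using that by blast
qed

lemma fmei_set_Fsys: "fmei_set Fsys {0, 1} {1/4..1/2}"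
  unfolding fmei_set_def fmei_point_def
proof (intro ballI conjI)
  fix x :: real
  assume "x \<in> {1/4..1/2}"
  then show "x \<in> {1/4..1/2}" .
  show "\<forall>\<epsilon>>0. \<exists>\<delta>>0. \<exists>S. finite S \<and> S \<subseteq> controls {0, 1} \<and>
      (\<forall>y\<in>ball x \<delta> \<inter> {1/4..1/2}. \<exists>\<omega>\<in>S. mean_dist Fsys {1/4..1/2} y \<omega> < ereal \<epsilon>)"
  proof (intro allI impI)
    fix \<epsilon> :: real
    assume "0 < \<epsilon>"
    then have "\<exists>\<omega>\<in>{\<lambda>_. 0, \<lambda>_. 1}. mean_dist Fsys {1/4..1/2} y \<omega> < ereal \<epsilon>"
      if "y \<in> {1/4..1/2}" for y
      using constant_control_mean_dist_eq_0[OF that] by (metis ereal_less(2))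
    then show "\<exists>\<delta>>0. \<exists>S. finite S \<and> S \<subseteq> controls {0, 1} \<and>
        (\<forall>y\<in>ball x \<delta> \<inter> {1/4..1/2}. \<exists>\<omega>\<in>S. mean_dist Fsys {1/4..1/2} y \<omega> < ereal \<epsilon>)"
      by (intro exI[of _ 1] conjI exI[of _ "{\<lambda>_. 0, \<lambda>_. 1}"]) (auto simp: controls_def)
  qed
qed

lemma phi_3_8_after_first_control_1:
  assumes "\<omega> k \<noteq> 0" "\<forall>i<k. \<omega> i = 0"
  shows "phi Fsys (Suc k) (3/8) \<omega> = 1/8"
proof -
  have "phi Fsys i (3/8) \<omega> = 3/8" if "i \<le> k" for i
    using that by (induction i) (simp_all add: assms(2) F0_def)
  then have "phi Fsys k (3/8) \<omega> = 3/8"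
    by simp
  then show ?thesis
    using assms(1) by (simp add: Fsys_def F1_def)
qed

lemma phi_const_0_below_3_8:
  assumes "0 < t" "2^j * t \<le> 1/8"
  shows "phi Fsys j (3/8 - t) (\<lambda>_. 0) = 3/8 - 2^j * t"
  using assms(2)
proof (induction j)
  case 0
  then show ?case by simp
next
  case (Suc j)
  then have "0 < 2^j * t" "2^j * t \<le> 1/16"
    using assms(1) by simp_all
  with Suc show ?case
    by (simp add: F0_def)
qed

lemma exists_point_near_3_8_reaching_1_8:
  assumes "0 < \<delta>"
  shows "\<exists>y\<in>ball (3/8) \<delta> \<inter> {1/4..1/2}. \<exists>i. phi Fsys i y \<omega> = 1/8"
proof (cases "\<forall>i. \<omega> i = 0")
  case True
  then have \<omega>: "\<omega> = (\<lambda>_. 0)"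
    by auto
  obtain m where m: "(1/2::real)^m < \<delta>"
    using real_arch_pow_inv[OF assms, of "1/2"] by auto
  define t where "t = (1/2::real)^m / 8"
  have "t \<le> (1/2)^m"
    by (simp add: t_def)
  with m have t: "0 < t" "t \<le> 1/8" "t < \<delta>" "2^m * t = 1/8"
    by (auto simp: t_def power_le_one power_one_over)
  then have "phi Fsys m (3/8 - t) \<omega> = 1/4"
    unfolding \<omega> by (simp add: phi_const_0_below_3_8)
  then have "phi Fsys (Suc m) (3/8 - t) \<omega> = 1/8"
    by (simp add: \<omega> F0_def)
  moreover have "3/8 - t \<in> ball (3/8) \<delta> \<inter> {1/4..1/2}"
    using t by (simp add: dist_real_def)
  ultimately show ?thesis
    by blast
next
  case False
  then obtain k where "\<omega> k \<noteq> 0" "\<forall>i<k. \<omega> i = 0"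
    using exists_least_iff[of "\<lambda>k. \<omega> k \<noteq> 0"] by auto
  then have "phi Fsys (Suc k) (3/8) \<omega> = 1/8"
    by (rule phi_3_8_after_first_control_1)
  moreover have "3/8 \<in> ball (3/8) \<delta> \<inter> {1/4..1/2::real}"
    using assms by simp
  ultimately show ?thesis
    by blast
qed

lemma not_mei_point_3_8: "\<not> mei_point Fsys {0, 1} {1/4..1/2} (3/8)"
proof
  assume "mei_point Fsys {0, 1} {1/4..1/2} (3/8)"
  then obtain \<delta> \<omega> where "0 < \<delta>"
    and small: "\<forall>y\<in>ball (3/8) \<delta> \<inter> {1/4..1/2}. mean_dist Fsys {1/4..1/2} y \<omega> < ereal (1/8)"
    unfolding mei_point_def by (elim conjE allE[of _ "1/8"]) auto
  obtain y i where y: "y \<in> ball (3/8) \<delta> \<inter> {1/4..1/2}" and "phi Fsys i y \<omega> = 1/8"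
    using exists_point_near_3_8_reaching_1_8[OF \<open>0 < \<delta>\<close>] by blast
  then have "ereal (1/8) \<le> mean_dist Fsys {1/4..1/2} y \<omega>"
    by (intro mean_dist_ge_of_reaching_low[of i]) simp
  with small y show False
    by (simp add: not_less[symmetric])
qed

theorem mainTheorem17:
  shows "fmei_set Fsys {0, 1} {1/4..1/2} \<and> \<not> mei_set Fsys {0, 1} {1/4..1/2}
         \<and> \<not> mei_point Fsys {0, 1} {1/4..1/2} (3/8)"
  using fmei_set_Fsys not_mei_point_3_8 unfolding mei_set_def by auto

end
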